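(* Let $a=(w_1,\dots,w_n)$ be a CLT sentence with every $w_i$ a closed word with first letter $1$ and no self edge. Then: (i) for each $i$ there exists a unique $j\ne i$ with $E_{w_i}\cap E_{w_j}\ne\emptyset$; (ii) $n$ is even, and there is a partition of $\{1,\dots,n\}$ into $n/2$ pairs $\{p_r,q_r\}$ ($r=1,\dots,n/2$) such that (a) each $a_r=(w_{p_r},w_{q_r})$ is a CLT pair; (b) the edge sets $E_{a_r}=E_{w_{p_r}}\cup E_{w_{q_r}}$ are pairwise disjoint; (c) the sets $V_r\setminus\{1\}$ are pairwise disjoint, where $V_r=\mathrm{supp}(w_{p_r})\cup\mathrm{supp}(w_{q_r})$.
   Context: A word is a finite sequence $w=(s_1,\dots,s_m)$ of positive integers; $\ell(w)=m$; closed means $s_1=s_m$; $\mathrm{supp}(w)$ is its set of letters. Edges: $E_w=\{\{s_i,s_{i+1}\}:1\le i\le m-1\}$ (undirected); a self edge is $\{u,u\}$; $N_e^w=\#\{i\le m-1:\{s_i,s_{i+1}\}=e\}$. For a sentence (finite sequence of words) $a=(w_1,\dots,w_n)$: $\mathrm{wt}(a)=\#\bigcup_i\mathrm{supp}(w_i)$, $E_a=\bigcup_iE_{w_i}$, $N_e^a=\sum_iN_e^{w_i}$. $a$ is a weak CLT sentence if $N_e^a\ge2$ for all $e\in E_a$ and for every $i$ there is $j\ne i$ with $E_{w_i}\cap E_{w_j}\ne\emptyset$; it is a CLT sentence if in addition $\mathrm{wt}(a)=1+\sum_{i=1}^n\frac{\ell(w_i)-2}{2}$. A pair $(w_1,w_2)$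 is a CLT pair if it is a weak CLT sentence with $n=2$ and $\mathrm{wt}((w_1,w_2))=\frac{\ell(w_1)+\ell(w_2)}{2}-1$. *)

theory Defs
  imports Complex_Main
begin

text \<open>A word is a finite list of positive integers (letters are nat, positivity is
an explicit hypothesis where needed). A sentence is a list of words; word i of
the sentence is a ! i for i < length a (0-based indexing).\<close>

definition word :: "nat list \<Rightarrow> bool" where
  "word w \<longleftrightarrow> (\<forall>s \<in> set w. 0 < s)"

definition closed_word :: "nat list \<Rightarrow> bool" where
  "closed_word w \<longleftrightarrow> w \<noteq> [] \<and> hd w = last w"

definition supp :: "nat list \<Rightarrow> nat set" where
  "supp w = set w"

text \<open>Undirected edges are represented as sets {u,v} (a self edge is {u}).\<close>
definition edges :: "nat list \<Rightarrow> nat set set" where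
  "edges w = {{w ! i, w ! (i+1)} | i. i + 1 < length w}"

definition edge_count :: "nat list \<Rightarrow> nat set \<Rightarrow> nat" where
  "edge_count w e = card {i. i + 1 < length w \<and> {w ! i, w ! (i+1)} = e}"

definition has_self_edge :: "nat list \<Rightarrow> bool" where
  "has_self_edge w \<longleftrightarrow> (\<exists>u. {u} \<in> edges w)"

definition wt :: "nat list list \<Rightarrow> nat" where
  "wt a = card (\<Union>i<length a. supp (a ! i))"

definition sent_edges :: "nat list list \<Rightarrow> nat set set" where
  "sent_edges a = (\<Union>i<length a. edges (a ! i))"

definition sent_edge_count :: "nat list list \<Rightarrow> nat set \<Rightarrow> nat" where
  "sent_edge_count a e = (\<Sum>i<length a. edge_count (a ! i) e)"

definition weak_CLT :: "nat list list \<Rightarrow> bool" where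
  "weak_CLT a \<longleftrightarrow>
     (\<forall>i<length a. word (a ! i)) \<and>
     (\<forall>e \<in> sent_edges a. 2 \<le> sent_edge_count a e) \<and>
     (\<forall>i<length a. \<exists>j<length a. j \<noteq> i \<and> edges (a ! i) \<inter> edges (a ! j) \<noteq> {})"

definition CLT :: "nat list list \<Rightarrow> bool" where
  "CLT a \<longleftrightarrow> weak_CLT a \<and>
     (of_nat (wt a) :: rat) = 1 + (\<Sum>i<length a. (of_nat (length (a ! i)) - 2) / 2)"

definition CLT_pair :: "nat list \<Rightarrow> nat list \<Rightarrow> bool" where
  "CLT_pair w1 w2 \<longleftrightarrow> weak_CLT [w1, w2] \<and>
     (of_nat (wt [w1, w2]) :: rat) = (of_nat (length w1) + of_nat (length w2)) / 2 - 1"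

end

theory Submission
  imports Defs
begin

(* Regard the words of a sentence b as closed walks from 1 in the graph (V, E)
   whose vertices are the letters and whose edges are the edges of the words, and fix a BFS
   spanning tree of this graph rooted at 1.  A closed walk crosses the fundamental cut of a
   tree edge an even number of times, so a word using only tree edges traverses each of them
   an even number of times.  Counting traversals edge by edge (tree edges, charging to each one
   the tree-only words that choose it as their shared edge, and non-tree edges) yields the
   weight bound  2 wt(b) + n <= steps(b) + 2,  and the CLT condition says this is an equality.
   Analysing the equality case shows that every word shares edges with exactly one other word
   (part (i)).  The resulting partner map is a fixed-point-free involution, so the words split
   into pairs; each pair is itself a sentence obeying the weight bound, and summing these
   bounds against the global equality makes every pair a CLT pair with vertex sets meeting
   only in 1 (part (ii)). *)

section \<open>Edge counts of a single word\<close>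

lemma edges_alt: "edges w = (\<lambda>i. {w ! i, w ! Suc i}) ` {..<length w - 1}"
  unfolding edges_def by (auto simp: image_def less_diff_conv)

lemma finite_edges [simp]: "finite (edges w)"
  unfolding edges_alt by simp

lemma sum_edge_count:
  assumes "finite S"
  shows "(\<Sum>e\<in>S. edge_count w e) = card {i \<in> {..<length w - 1}. {w ! i, w ! Suc i} \<in> S}"
proof -
  have count: "edge_count w e = (\<Sum>i<length w - 1. if {w ! i, w ! Suc i} = e then 1 else 0)" for e
  proof -
    have "{i. i + 1 < length w \<and> {w ! i, w ! (i+1)} = e}
        = {i \<in> {..<length w - 1}. {w ! i, w ! Suc i} = e}"
      by auto
    then show ?thesis unfolding edge_count_def by (simp add: sum.inter_filter[symmetric])
  qed
  have "(\<Sum>e\<in>S. edge_count w e)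
      = (\<Sum>i<length w - 1. \<Sum>e\<in>S. if {w ! i, w ! Suc i} = e then 1 else 0)"
    unfolding count by (rule sum.swap)
  also have "\<dots> = (\<Sum>i<length w - 1. if {w ! i, w ! Suc i} \<in> S then 1 else 0)"
    using assms by (simp add: sum.delta)
  also have "\<dots> = card {i \<in> {..<length w - 1}. {w ! i, w ! Suc i} \<in> S}"
    by (simp add: sum.inter_filter[symmetric])
  finally show ?thesis .
qed

lemma sum_edge_count_all:
  assumes "finite S" "edges w \<subseteq> S"
  shows "(\<Sum>e\<in>S. edge_count w e) = length w - 1"
proof -
  have "{i \<in> {..<length w - 1}. {w ! i, w ! Suc i} \<in> S} = {..<length w - 1}"
    using assms(2) unfolding edges_alt by auto
  then show ?thesis using sum_edge_count[OF assms(1)] by simp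
qed

lemma edge_count_pos: "0 < edge_count w e \<longleftrightarrow> e \<in> edges w"
proof -
  have "finite {i. i + 1 < length w \<and> {w ! i, w ! (i+1)} = e}"
    by (rule finite_subset[of _ "{..<length w}"]) auto
  then show ?thesis unfolding edge_count_def edges_def by (auto simp: card_gt_0_iff)
qed

lemma edge_count_zero: "e \<notin> edges w \<Longrightarrow> edge_count w e = 0"
  using edge_count_pos[of w e] by simp

definition crosses :: "nat set \<Rightarrow> nat set \<Rightarrow> bool" where
  "crosses A e \<longleftrightarrow> (\<exists>x y. e = {x, y} \<and> x \<in> A \<and> y \<notin> A)"

lemma crosses_pair: "crosses A {x, y} \<longleftrightarrow> (x \<in> A) \<noteq> (y \<in> A)"
  unfolding crosses_def by (auto simp: doubleton_eq_iff)

lemma crossings_parity: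
  "j < length w \<Longrightarrow> even (card {i \<in> {..<j}. (w ! i \<in> A) \<noteq> (w ! Suc i \<in> A)}
      + (if (w ! 0 \<in> A) = (w ! j \<in> A) then 0 else 1))"
proof (induction j)
  case 0
  then show ?case by simp
next
  case (Suc j)
  let ?S = "\<lambda>j. {i \<in> {..<j}. (w ! i \<in> A) \<noteq> (w ! Suc i \<in> A)}"
  have IH: "even (card (?S j) + (if (w ! 0 \<in> A) = (w ! j \<in> A) then 0 else 1))"
    using Suc by simp
  show ?case
  proof (cases "(w ! j \<in> A) \<noteq> (w ! Suc j \<in> A)")
    case True
    then have "?S (Suc j) = insert j (?S j)" by (auto simp: less_Suc_eq)
    then have "card (?S (Suc j)) = Suc (card (?S j))" by simp
    then show ?thesis using IH True by auto
  next
    case False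
    then have "?S (Suc j) = ?S j" by (auto simp: less_Suc_eq)
    then show ?thesis using IH False by auto
  qed
qed

lemma closed_word_cut_parity:
  assumes "closed_word w" "finite S" "edges w \<subseteq> S"
  shows "even (\<Sum>e\<in>{e\<in>S. crosses A e}. edge_count w e)"
proof -
  have "{i \<in> {..<length w - 1}. {w ! i, w ! Suc i} \<in> {e\<in>S. crosses A e}}
       = {i \<in> {..<length w - 1}. (w ! i \<in> A) \<noteq> (w ! Suc i \<in> A)}"
    using assms(3) unfolding edges_alt by (auto simp: crosses_pair)
  moreover have "w \<noteq> []" "w ! 0 = w ! (length w - 1)"
    using assms(1) unfolding closed_word_def by (auto simp: hd_conv_nth last_conv_nth)
  ultimately show ?thesis
    using sum_edge_count[of "{e\<in>S. crosses A e}" w] crossings_parity[of "length w - 1" w A] assms(2)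
    by simp
qed

definition steps :: "nat list list \<Rightarrow> nat" where
  "steps a = (\<Sum>i<length a. length (a ! i) - 1)"

text \<open>For sentences of nonempty words the CLT weight condition says exactly that the weight
  bound is an equality; in particular a CLT sentence is nonempty.\<close>
lemma CLT_tight:
  assumes "CLT a" and nonempty_words: "\<forall>i<length a. a ! i \<noteq> []"
  shows "0 < length a" "2 * wt a + length a = steps a + 2"
proof -
  let ?n = "length a" and ?l = "\<lambda>i. of_nat (length (a ! i)) :: rat"
  have eq: "of_nat (wt a) = 1 + (\<Sum>i<?n. (?l i - 2) / 2)"
    using assms(1) unfolding CLT_def by auto
  show "0 < ?n"
  proof (rule ccontr)
    assume "\<not> 0 < ?n"
    then show False using eq unfolding wt_def by simp
  qed
  have "of_nat (steps a) = (\<Sum>i<?n. ?l i - 1)"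
    unfolding steps_def of_nat_sum
    by (intro sum.cong refl) (use nonempty_words in \<open>auto simp: of_nat_diff Suc_leI\<close>)
  moreover have "(\<Sum>i<?n. (?l i - 2) / 2) = ((\<Sum>i<?n. ?l i - 1) - of_nat ?n) / 2"
    by (simp add: sum_divide_distrib[symmetric] sum_subtractf algebra_simps)
  ultimately have "(of_nat (2 * wt a + ?n) :: rat) = of_nat (steps a + 2)"
    using eq by simp
  then show "2 * wt a + ?n = steps a + 2" by (simp only: of_nat_eq_iff)
qed

lemma sent_edges_pair: "sent_edges [u, v] = edges u \<union> edges v"
  unfolding sent_edges_def by (simp add: lessThan_Suc numeral_2_eq_2 Un_commute)

lemma sent_edge_count_pair: "sent_edge_count [u, v] e = edge_count u e + edge_count v e"
  unfolding sent_edge_count_def by (simp add: numeral_2_eq_2)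

lemma wt_pair: "wt [u, v] = card (supp u \<union> supp v)"
  unfolding wt_def by (simp add: lessThan_Suc numeral_2_eq_2 Un_commute)

lemma steps_pair: "steps [u, v] = (length u - 1) + (length v - 1)"
  unfolding steps_def by (simp add: numeral_2_eq_2)

lemma CLT_pair_of_tight:
  assumes "weak_CLT [u, v]" "u \<noteq> []" "v \<noteq> []" "2 * wt [u, v] = steps [u, v]"
  shows "CLT_pair u v"
proof -
  obtain x xs y ys where "u = x # xs" "v = y # ys" using assms(2,3) by (meson neq_Nil_conv)
  then have wt2: "2 * wt [u, v] = length xs + length ys"
    and len: "length u = Suc (length xs)" "length v = Suc (length ys)"
    using assms(4) by (simp_all add: steps_pair)
  have "(of_nat (2 * wt [u, v]) :: rat) = of_nat (length xs + length ys)" using wt2 by argo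
  then have "2 * (of_nat (wt [u, v]) :: rat) = of_nat (length u) + of_nat (length v) - 2"
    unfolding len by simp
  then show ?thesis using assms(1) unfolding CLT_pair_def by (simp add: field_simps)
qed

lemma isolated_pair_weak_CLT:
  assumes weak: "weak_CLT a" and ij: "i < length a" "j < length a" "i \<noteq> j"
    and share: "edges (a ! i) \<inter> edges (a ! j) \<noteq> {}"
    and isolated: "\<And>x z. x \<in> {i, j} \<Longrightarrow> z < length a \<Longrightarrow> z \<notin> {i, j} \<Longrightarrow>
      edges (a ! x) \<inter> edges (a ! z) = {}"
  shows "weak_CLT [a ! i, a ! j]"
proof -
  have count: "sent_edge_count a e = edge_count (a ! i) e + edge_count (a ! j) e"
    if e: "e \<in> edges (a ! i) \<union> edges (a ! j)" for e
  proof -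
    have "(\<Sum>z\<in>{..<length a} - {i, j}. edge_count (a ! z) e) = 0"
      using isolated e by (intro sum.neutral ballI edge_count_zero) blast
    then show ?thesis
      using sum.subset_diff[of "{i, j}" "{..<length a}" "\<lambda>z. edge_count (a ! z) e"] ij
      unfolding sent_edge_count_def by simp
  qed
  have "2 \<le> sent_edge_count a e" if "e \<in> edges (a ! i) \<union> edges (a ! j)" for e
    using weak that ij unfolding weak_CLT_def sent_edges_def by blast
  then have counts: "\<forall>e\<in>edges (a ! i) \<union> edges (a ! j). 2 \<le> edge_count (a ! i) e + edge_count (a ! j) e"
    using count by simp
  have words: "\<forall>x<length [a ! i, a ! j]. word ([a ! i, a ! j] ! x)"
    using weak ij unfolding weak_CLT_def by (auto simp: less_Suc_eq)
  have shares: "\<forall>x<length [a ! i, a ! j]. \<exists>y<length [a ! i, a ! j].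
      y \<noteq> x \<and> edges ([a ! i, a ! j] ! x) \<inter> edges ([a ! i, a ! j] ! y) \<noteq> {}"
  proof (intro allI impI)
    fix x assume "x < length [a ! i, a ! j]"
    then have "x = 0 \<or> x = 1" by auto
    then show "\<exists>y<length [a ! i, a ! j].
      y \<noteq> x \<and> edges ([a ! i, a ! j] ! x) \<inter> edges ([a ! i, a ! j] ! y) \<noteq> {}"
    proof
      assume "x = 0" then show ?thesis using share by (intro exI[of _ 1]) auto
    next
      assume "x = 1" then show ?thesis using share by (intro exI[of _ 0]) (auto simp: Int_commute)
    qed
  qed
  show ?thesis unfolding weak_CLT_def sent_edges_pair sent_edge_count_pair
    by (intro conjI words counts shares)
qed

definition pairing :: "nat \<Rightarrow> (nat \<Rightarrow> nat) \<Rightarrow> (nat \<Rightarrow> nat) \<Rightarrow> bool" where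
  "pairing n p q \<longleftrightarrow>
     (\<forall>r<n div 2. p r < n \<and> q r < n \<and> p r \<noteq> q r) \<and>
     (\<forall>r<n div 2. \<forall>r'<n div 2. r \<noteq> r' \<longrightarrow> {p r, q r} \<inter> {p r', q r'} = {}) \<and>
     (\<Union>r<n div 2. {p r, q r}) = {..<n}"

lemma pairingD:
  assumes "pairing n p q" and "r < n div 2"
  shows "p r < n" "q r < n" "p r \<noteq> q r"
    "\<And>r'. r' < n div 2 \<Longrightarrow> r \<noteq> r' \<Longrightarrow> {p r, q r} \<inter> {p r', q r'} = {}"
  using assms unfolding pairing_def by auto

lemma sum_pairing:
  assumes "pairing n p q"
  shows "(\<Sum>i<n. f i) = (\<Sum>r<n div 2. f (p r) + f (q r))"
proof -
  have disj: "\<forall>r\<in>{..<n div 2}. \<forall>r'\<in>{..<n div 2}. r \<noteq> r' \<longrightarrow> {p r, q r} \<inter> {p r', q r'} = {}"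
    using assms unfolding pairing_def by blast
  have "(\<Sum>i<n. f i) = sum f (\<Union>r<n div 2. {p r, q r})"
    using assms unfolding pairing_def by simp
  also have "\<dots> = (\<Sum>r<n div 2. sum f {p r, q r})"
    by (rule sum.UNION_disjoint[OF finite_lessThan _ disj]) simp
  also have "\<dots> = (\<Sum>r<n div 2. f (p r) + f (q r))"
    using assms unfolding pairing_def by (intro sum.cong) auto
  finally show ?thesis .
qed

lemma UN_pairing:
  assumes "pairing n p q"
  shows "(\<Union>i<n. A i) = (\<Union>r<n div 2. A (p r) \<union> A (q r))"
proof -
  have "(\<Union>i<n. A i) = (\<Union>i\<in>(\<Union>r<n div 2. {p r, q r}). A i)"
    using assms unfolding pairing_def by simp
  then show ?thesis by auto
qed

lemma involution_pairing:
  fixes P :: "nat \<Rightarrow> nat"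
  assumes P: "\<And>i. i < n \<Longrightarrow> P i < n" "\<And>i. i < n \<Longrightarrow> P i \<noteq> i" "\<And>i. i < n \<Longrightarrow> P (P i) = i"
  shows "even n" and "\<exists>p. pairing n p (\<lambda>r. P (p r))"
proof -
  define L where "L = {i. i < n \<and> i < P i}"
  have finite_L: "finite L" unfolding L_def by simp
  have inj: "inj_on P L" unfolding L_def by (rule inj_onI) (metis P(3) mem_Collect_eq)
  have disj: "L \<inter> P ` L = {}" using P(3) unfolding L_def by fastforce
  have cover: "{..<n} = L \<union> P ` L"
  proof
    show "{..<n} \<subseteq> L \<union> P ` L"
    proof
      fix i assume "i \<in> {..<n}"
      then have i: "i < n" by simp
      show "i \<in> L \<union> P ` L"
      proof (cases "i < P i")
        case False
        then have "P i \<in> L" using P[OF i] unfolding L_def by auto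
        then show ?thesis using P(3)[OF i] by (metis UnI2 image_eqI)
      qed (use i L_def in auto)
    qed
    show "L \<union> P ` L \<subseteq> {..<n}" using P(1) unfolding L_def by auto
  qed
  have "n = card L + card (P ` L)"
    using card_Un_disjoint[OF finite_L _ disj] finite_L cover by (metis card_lessThan finite_imageI)
  then have half: "n div 2 = card L" "n = 2 * card L" using card_image[OF inj] by simp_all
  then show "even n" by simp
  obtain p where p: "bij_betw p {..<card L} L"
    using ex_bij_betw_nat_finite[OF finite_L] by (auto simp: atLeast0LessThan)
  have p_img: "p ` {..<card L} = L" using bij_betw_imp_surj_on[OF p] .
  have p_inj: "inj_on p {..<card L}" using bij_betw_imp_inj_on[OF p] .
  have p_lt: "\<forall>r<n div 2. p r < n" using p_img half(1) unfolding L_def by auto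
  have "{p r, P (p r)} \<inter> {p r', P (p r')} = {}" if r: "r < card L" "r' < card L" "r \<noteq> r'" for r r'
  proof -
    have L: "p r \<in> L" "p r' \<in> L" using p_img r by auto
    have "p r \<noteq> p r'" using inj_onD[OF p_inj] r by auto
    moreover have "P (p r) \<noteq> P (p r')" using inj_onD[OF inj] L \<open>p r \<noteq> p r'\<close> by metis
    moreover have "p r \<noteq> P (p r')" "P (p r) \<noteq> p r'" using disj L by (metis IntI empty_iff imageI)+
    ultimately show ?thesis by auto
  qed
  then have p_disj: "\<forall>r<n div 2. \<forall>r'<n div 2. r \<noteq> r' \<longrightarrow> {p r, P (p r)} \<inter> {p r', P (p r')} = {}"
    using half(1) by simp
  have "(\<Union>r<n div 2. {p r, P (p r)}) = p ` {..<card L} \<union> P ` p ` {..<card L}"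
    using half(1) by auto
  then have p_cover: "(\<Union>r<n div 2. {p r, P (p r)}) = {..<n}" using p_img cover by simp
  have "p r < n \<and> P (p r) < n \<and> p r \<noteq> P (p r)" if "r < n div 2" for r
    using p_lt that P(1)[of "p r"] P(2)[of "p r"] by simp
  then show "\<exists>p. pairing n p (\<lambda>r. P (p r))"
    using p_disj p_cover unfolding pairing_def by blast
qed

lemma sum_eq_1_nat:
  fixes f :: "'a \<Rightarrow> nat"
  assumes "finite S" "sum f S = 1"
  shows "\<exists>x\<in>S. f x = 1 \<and> (\<forall>y\<in>S. y \<noteq> x \<longrightarrow> f y = 0)"
proof -
  obtain x where x: "x \<in> S" "f x \<noteq> 0"
    using assms by (metis sum.neutral zero_neq_one)
  have "sum f S = f x + sum f (S - {x})" using assms(1) x(1) by (rule sum.remove)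
  then have "f x = 1" "sum f (S - {x}) = 0" using assms x by linarith+
  then show ?thesis using x assms(1) by auto
qed

lemma card_UN_eq_sum_disjoint:
  assumes fin: "finite I" "\<And>i. i \<in> I \<Longrightarrow> finite (X i)"
    and eq: "card (\<Union>(X ` I)) = (\<Sum>i\<in>I. card (X i))"
    and r: "r \<in> I" "r' \<in> I" "r \<noteq> r'"
  shows "X r \<inter> X r' = {}"
proof (rule ccontr)
  assume overlap: "X r \<inter> X r' \<noteq> {}"
  define J where "J = I - {r, r'}"
  have I: "I = insert r (insert r' J)" "r \<notin> insert r' J" "r' \<notin> J" using r unfolding J_def by auto
  have finite_J: "finite J" using fin unfolding J_def by simp
  have "card (X r \<union> X r') < card (X r) + card (X r')"
  proof -
    have "finite (X r)" "finite (X r')" using fin(2) r by auto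
    then have "card (X r) + card (X r') = card (X r \<union> X r') + card (X r \<inter> X r')"
      by (rule card_Un_Int)
    moreover have "card (X r \<inter> X r') > 0" using overlap \<open>finite (X r)\<close> by (simp add: card_gt_0_iff)
    ultimately show ?thesis by linarith
  qed
  moreover have "card (\<Union>(X ` I)) \<le> card (X r \<union> X r') + card (\<Union>(X ` J))"
  proof -
    have "\<Union>(X ` I) = (X r \<union> X r') \<union> \<Union>(X ` J)" using I by auto
    then show ?thesis using card_Un_le[of "X r \<union> X r'" "\<Union>(X ` J)"] by simp
  qed
  moreover have "card (\<Union>(X ` J)) \<le> (\<Sum>i\<in>J. card (X i))" using card_UN_le[OF finite_J] .
  moreover have "(\<Sum>i\<in>I. card (X i)) = card (X r) + card (X r') + (\<Sum>i\<in>J. card (X i))"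
    unfolding I(1) using finite_J I(2,3) by (simp add: sum.insert)
  ultimately show False using eq by linarith
qed

lemma tight_union_bound:
  fixes X :: "'i \<Rightarrow> 'a set" and y :: "'i \<Rightarrow> nat"
  assumes fin: "finite I" "\<And>r. r \<in> I \<Longrightarrow> finite (X r)"
    and base: "\<And>r. r \<in> I \<Longrightarrow> x0 \<in> X r" and ne: "I \<noteq> {}"
    and local: "\<And>r. r \<in> I \<Longrightarrow> 2 * card (X r) \<le> y r"
    and global: "sum y I + 2 \<le> 2 * card (\<Union>(X ` I)) + 2 * card I"
  shows "\<And>r. r \<in> I \<Longrightarrow> 2 * card (X r) = y r"
    and "\<And>r r'. r \<in> I \<Longrightarrow> r' \<in> I \<Longrightarrow> r \<noteq> r' \<Longrightarrow> (X r - {x0}) \<inter> (X r' - {x0}) = {}"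
proof -
  let ?U = "\<Union>(X ` I)" and ?Y = "\<lambda>r. X r - {x0}"
  have card_X: "card (X r) = Suc (card (?Y r))" if "r \<in> I" for r
    using card_Suc_Diff1[OF fin(2)[OF that] base[OF that]] by simp
  have "x0 \<in> ?U" using base ne by blast
  moreover have "?U - {x0} = \<Union>(?Y ` I)" by auto
  ultimately have card_U: "card ?U = Suc (card (\<Union>(?Y ` I)))"
    using card_Suc_Diff1[of ?U x0] fin by simp
  have le: "card (\<Union>(?Y ` I)) \<le> (\<Sum>r\<in>I. card (?Y r))" by (rule card_UN_le[OF fin(1)])
  have "(\<Sum>r\<in>I. 2 * card (X r)) = (\<Sum>r\<in>I. 2 + 2 * card (?Y r))"
    using card_X by (intro sum.cong) auto
  then have twice: "(\<Sum>r\<in>I. 2 * card (X r)) = 2 * card I + 2 * (\<Sum>r\<in>I. card (?Y r))"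
    by (simp only: sum.distrib sum_distrib_left) simp
  have mono: "(\<Sum>r\<in>I. 2 * card (X r)) \<le> sum y I" using local by (rule sum_mono)
  have eq_sum: "(\<Sum>r\<in>I. 2 * card (X r)) = sum y I"
    using global card_U le twice mono by linarith
  have eq_card: "card (\<Union>(?Y ` I)) = (\<Sum>r\<in>I. card (?Y r))"
    using global card_U le twice mono by linarith
  show "\<And>r. r \<in> I \<Longrightarrow> 2 * card (X r) = y r"
    using sum_mono_inv[OF eq_sum] local fin(1) by blast
  show "\<And>r r'. r \<in> I \<Longrightarrow> r' \<in> I \<Longrightarrow> r \<noteq> r' \<Longrightarrow> ?Y r \<inter> ?Y r' = {}"
    using card_UN_eq_sum_disjoint[OF fin(1) _ eq_card] fin(2) by blast
qed

section \<open>A BFS spanning tree of the graph of a sentence\<close>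

locale closed_sentence =
  fixes b :: "nat list list"
  assumes nonempty: "0 < length b"
    and weak: "weak_CLT b"
    and closed: "\<forall>i<length b. closed_word (b ! i) \<and> hd (b ! i) = 1 \<and> \<not> has_self_edge (b ! i)"
begin

abbreviation "n \<equiv> length b"
definition "V = (\<Union>i<n. set (b ! i))"
abbreviation "E \<equiv> sent_edges b"
abbreviation "c i e \<equiv> edge_count (b ! i) e"
abbreviation "k e \<equiv> sent_edge_count b e"

definition "R = {(x, y). {x, y} \<in> E}"

lemma word_closed: "i < n \<Longrightarrow> closed_word (b ! i)" "i < n \<Longrightarrow> hd (b ! i) = 1"
  "i < n \<Longrightarrow> \<not> has_self_edge (b ! i)"
  using closed by auto

lemma mult_ge2: "e \<in> E \<Longrightarrow> 2 \<le> k e"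
  using weak unfolding weak_CLT_def by blast

lemma shares_edge: "i < n \<Longrightarrow> \<exists>j<n. j \<noteq> i \<and> edges (b ! i) \<inter> edges (b ! j) \<noteq> {}"
  using weak unfolding weak_CLT_def by blast

lemma wt_eq: "wt b = card V"
  unfolding wt_def supp_def V_def ..

lemma finite_V: "finite V" unfolding V_def by simp
lemma finite_E: "finite E" unfolding sent_edges_def by simp
lemma edges_sub_E: "i < n \<Longrightarrow> edges (b ! i) \<subseteq> E" unfolding sent_edges_def by auto

lemma k_sum: "k e = (\<Sum>i<n. c i e)" unfolding sent_edge_count_def ..

lemma one_in_V: "1 \<in> V"
proof -
  have "b ! 0 \<noteq> []" "hd (b ! 0) = 1"
    using word_closed[OF nonempty] unfolding closed_word_def by auto
  then have "1 \<in> set (b ! 0)" by (metis hd_in_set)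
  then show ?thesis using nonempty unfolding V_def by auto
qed

lemma E_shape:
  assumes "e \<in> E"
  shows "\<exists>x y. e = {x, y} \<and> x \<noteq> y \<and> x \<in> V \<and> y \<in> V"
proof -
  obtain i where i: "i < n" "e \<in> edges (b ! i)" using assms unfolding sent_edges_def by auto
  then obtain j where j: "j + 1 < length (b ! i)" "e = {b ! i ! j, b ! i ! (j+1)}"
    unfolding edges_def by auto
  have "b ! i ! j \<noteq> b ! i ! (j+1)"
  proof
    assume "b ! i ! j = b ! i ! (j+1)"
    then have "{b ! i ! j} \<in> edges (b ! i)" using j unfolding edges_def by auto
    then show False using word_closed(3)[OF i(1)] unfolding has_self_edge_def by auto
  qed
  moreover have "b ! i ! j \<in> V" "b ! i ! (j+1) \<in> V"
    using i j unfolding V_def by (auto intro!: bexI[of _ i])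
  ultimately show ?thesis using j by blast
qed

lemma R_V: assumes "(x, y) \<in> R" shows "x \<in> V" "y \<in> V" "x \<noteq> y"
proof -
  have "{x, y} \<in> E" using assms unfolding R_def by simp
  then obtain x' y' where "{x, y} = {x', y'}" "x' \<noteq> y'" "x' \<in> V" "y' \<in> V"
    using E_shape by blast
  then show "x \<in> V" "y \<in> V" "x \<noteq> y" by (auto simp: doubleton_eq_iff)
qed

lemma reach_word: "i < n \<Longrightarrow> j < length (b ! i) \<Longrightarrow> (1, b ! i ! j) \<in> R\<^sup>*"
proof (induction j)
  case 0
  have "b ! i \<noteq> []" "hd (b ! i) = 1" using word_closed[OF 0(1)] unfolding closed_word_def by auto
  then have "b ! i ! 0 = 1" by (metis hd_conv_nth)
  then show ?case by simp
next
  case (Suc j)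
  have "{b ! i ! j, b ! i ! Suc j} \<in> edges (b ! i)" using Suc.prems unfolding edges_def by force
  then have "(b ! i ! j, b ! i ! Suc j) \<in> R" using edges_sub_E[OF Suc.prems(1)] unfolding R_def by auto
  then show ?case using Suc by (meson Suc_lessD rtrancl.rtrancl_into_rtrancl)
qed

lemma reach: assumes "v \<in> V" shows "(1, v) \<in> R\<^sup>*"
proof -
  obtain i where "i < n" "v \<in> set (b ! i)" using assms unfolding V_def by auto
  then obtain j where "j < length (b ! i)" "v = b ! i ! j" by (auto simp: in_set_conv_nth)
  then show ?thesis using reach_word \<open>i < n\<close> by blast
qed

definition "depth v = (LEAST m. (1, v) \<in> R ^^ m)"
definition "parent v = (if v = 1 then 1 else SOME u. (u, v) \<in> R \<and> depth u < depth v)"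

lemma parent_exists:
  assumes "v \<in> V" "v \<noteq> 1"
  shows "\<exists>u. (u, v) \<in> R \<and> depth u < depth v"
proof -
  obtain m where "(1, v) \<in> R ^^ m" using reach[OF assms(1)] rtrancl_power by blast
  then have dv: "(1, v) \<in> R ^^ depth v" unfolding depth_def by (rule LeastI)
  have "depth v \<noteq> 0" using dv assms(2) by (cases "depth v") auto
  then obtain m' where m': "depth v = Suc m'" using not0_implies_Suc by blast
  then obtain u where u: "(1, u) \<in> R ^^ m'" "(u, v) \<in> R" using dv by auto
  have "depth u \<le> m'" unfolding depth_def using u(1) by (rule Least_le)
  then show ?thesis using u m' by auto
qed

lemma parent: assumes "v \<in> V" "v \<noteq> 1"
  shows "(parent v, v) \<in> R" "depth (parent v) < depth v"
  using someI_ex[OF parent_exists[OF assms]] assms(2) unfolding parent_def by auto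

lemma parent_V: "v \<in> V \<Longrightarrow> parent v \<in> V"
  using parent R_V by (cases "v = 1") (auto simp: parent_def)

lemma parent_depth_le: "v \<in> V \<Longrightarrow> depth (parent v) \<le> depth v"
  using parent by (cases "v = 1") (auto simp: parent_def intro: less_imp_le)

lemma ancestor_depth_le: "v \<in> V \<Longrightarrow> depth ((parent ^^ m) v) \<le> depth v"
proof (induction m arbitrary: v)
  case 0 then show ?case by simp
next
  case (Suc m)
  have "depth ((parent ^^ Suc m) v) = depth ((parent ^^ m) (parent v))"
    by (simp add: funpow_Suc_right del: funpow.simps)
  also have "\<dots> \<le> depth (parent v)" using Suc parent_V by blast
  also have "\<dots> \<le> depth v" using parent_depth_le Suc by blast
  finally show ?case .
qed

lemma proper_ancestor_depth: "v \<in> V \<Longrightarrow> v \<noteq> 1 \<Longrightarrow> depth ((parent ^^ Suc m) v) < depth v"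
proof -
  assume v: "v \<in> V" "v \<noteq> 1"
  have "depth ((parent ^^ Suc m) v) = depth ((parent ^^ m) (parent v))"
    by (simp add: funpow_Suc_right del: funpow.simps)
  also have "\<dots> \<le> depth (parent v)" using v parent_V ancestor_depth_le by blast
  also have "\<dots> < depth v" using parent v by blast
  finally show ?thesis .
qed

lemma ancestor_root: "(parent ^^ m) 1 = 1"
  by (induction m) (auto simp: parent_def)

definition "subtree v = {w \<in> V. \<exists>m. (parent ^^ m) w = v}"
definition "tree = (\<lambda>v. {parent v, v}) ` (V - {1})"

lemma tree_edge_cut:
  assumes v: "v \<in> V - {1}" and w: "w \<in> V - {1}"
  shows "crosses (subtree v) {parent w, w} \<longleftrightarrow> w = v"
proof
  assume "w = v"
  have "v \<in> subtree v" using v unfolding subtree_def by (auto intro: exI[of _ 0])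
  moreover have "parent v \<notin> subtree v"
  proof
    assume "parent v \<in> subtree v"
    then obtain m where "(parent ^^ m) (parent v) = v" unfolding subtree_def by auto
    then have "(parent ^^ Suc m) v = v" by (simp add: funpow_Suc_right del: funpow.simps)
    then show False using proper_ancestor_depth[of v m] v by auto
  qed
  ultimately show "crosses (subtree v) {parent w, w}" using \<open>w = v\<close> by (auto simp: crosses_pair)
next
  assume cr: "crosses (subtree v) {parent w, w}"
  show "w = v"
  proof (cases "w \<in> subtree v")
    case True
    then obtain m where m: "(parent ^^ m) w = v" unfolding subtree_def by auto
    show ?thesis
    proof (cases m)
      case 0 then show ?thesis using m by simp
    next
      case (Suc m')
      then have "(parent ^^ m') (parent w) = v" using m by (simp add: funpow_Suc_right del: funpow.simps)
      then have "parent w \<in> subtree v" using parent_V w unfolding subtree_def by auto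
      then show ?thesis using cr True by (auto simp: crosses_pair)
    qed
  next
    case False
    then have "parent w \<in> subtree v" using cr by (auto simp: crosses_pair)
    then obtain m where "(parent ^^ m) (parent w) = v" unfolding subtree_def by auto
    then have "(parent ^^ Suc m) w = v" by (simp add: funpow_Suc_right del: funpow.simps)
    then have "w \<in> subtree v" using w unfolding subtree_def by blast
    then show ?thesis using False by simp
  qed
qed

lemma card_tree: "card tree = card V - 1"
proof -
  have "inj_on (\<lambda>v. {parent v, v}) (V - {1})"
  proof (rule inj_onI)
    fix v w assume vw: "v \<in> V - {1}" "w \<in> V - {1}" "{parent v, v} = {parent w, w}"
    then have "crosses (subtree v) {parent w, w}" using tree_edge_cut[OF vw(1) vw(1)] by simp
    then show "v = w" using tree_edge_cut[OF vw(1) vw(2)] by simp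
  qed
  then have "card tree = card (V - {1})" unfolding tree_def by (rule card_image)
  then show ?thesis using finite_V one_in_V by simp
qed

lemma tree_sub_E: "tree \<subseteq> E"
  unfolding tree_def using parent unfolding R_def by auto

lemma finite_tree: "finite tree"
  using finite_subset[OF tree_sub_E finite_E] .

lemma tree_edge: "e \<in> tree \<Longrightarrow> \<exists>v\<in>V - {1}. e = {parent v, v}"
  unfolding tree_def by auto

lemma separating_subtree:
  assumes "x \<in> V" "y \<in> V" "x \<noteq> y"
  shows "\<exists>v\<in>V - {1}. crosses (subtree v) {x, y}"
proof -
  have own: "x \<in> subtree x" "y \<in> subtree y"
    using assms unfolding subtree_def by (auto intro: exI[of _ 0])
  have root: "1 \<notin> subtree u" if "u \<noteq> 1" for u
    using that ancestor_root unfolding subtree_def by auto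
  show ?thesis
  proof (cases "x \<noteq> 1 \<and> y \<notin> subtree x")
    case True then show ?thesis using own assms by (auto simp: crosses_pair)
  next
    case F1: False
    show ?thesis
    proof (cases "y \<noteq> 1 \<and> x \<notin> subtree y")
      case True then show ?thesis using own assms by (auto simp: crosses_pair insert_commute)
    next
      case F2: False
      have "x \<noteq> 1" "y \<noteq> 1" using F1 F2 root assms(3) by auto
      then have "y \<in> subtree x" "x \<in> subtree y" using F1 F2 by auto
      then obtain m m' where m: "(parent ^^ m) y = x" "(parent ^^ m') x = y"
        unfolding subtree_def by auto
      then obtain m1 m1' where "m = Suc m1" "m' = Suc m1'" using assms(3)
        by (metis funpow_0 not0_implies_Suc)
      then have "depth x < depth y" "depth y < depth x"
        using proper_ancestor_depth m assms \<open>x \<noteq> 1\<close> \<open>y \<noteq> 1\<close> by metis+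
      then show ?thesis by simp
    qed
  qed
qed

lemma tree_edge_parity:
  assumes v: "v \<in> V - {1}" and i: "i < n"
  shows "even (c i {parent v, v} + (\<Sum>e\<in>{e\<in>E - tree. crosses (subtree v) e}. c i e))"
proof -
  have "{e\<in>E. crosses (subtree v) e} = insert {parent v, v} {e\<in>E - tree. crosses (subtree v) e}"
    using tree_edge_cut[OF v] tree_sub_E v unfolding tree_def by auto
  moreover have "{parent v, v} \<notin> {e\<in>E - tree. crosses (subtree v) e}"
    using v unfolding tree_def by auto
  ultimately show ?thesis
    using closed_word_cut_parity[OF word_closed(1)[OF i] finite_E edges_sub_E[OF i], of "subtree v"]
      finite_E by simp
qed

end

section \<open>The weight bound\<close>

context closed_sentence
begin

definition "tree_words = {i. i < n \<and> edges (b ! i) \<subseteq> tree}"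
definition "cyclic_words = {i. i < n \<and> \<not> edges (b ! i) \<subseteq> tree}"

definition "shared_edge i = (SOME e. e \<in> edges (b ! i) \<and> (\<exists>j<n. j \<noteq> i \<and> e \<in> edges (b ! j)))"
definition "attached e = {i \<in> tree_words. shared_edge i = e}"
definition "excess i = (\<Sum>e\<in>E - tree. c i e)"

lemma finite_tree_words: "finite tree_words" unfolding tree_words_def by simp
lemma finite_cyclic_words: "finite cyclic_words" unfolding cyclic_words_def by simp
lemma finite_attached: "finite (attached e)" unfolding attached_def using finite_tree_words by simp
lemma attached_sub: "attached e \<subseteq> {..<n}" unfolding attached_def tree_words_def by auto

lemma word_classes: "{..<n} = tree_words \<union> cyclic_words" "tree_words \<inter> cyclic_words = {}"
  unfolding tree_words_def cyclic_words_def by auto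

lemma shared_edge:
  assumes "i < n"
  shows "shared_edge i \<in> edges (b ! i)" "\<exists>j<n. j \<noteq> i \<and> shared_edge i \<in> edges (b ! j)"
proof -
  have "\<exists>e. e \<in> edges (b ! i) \<and> (\<exists>j<n. j \<noteq> i \<and> e \<in> edges (b ! j))"
    using shares_edge[OF assms] by blast
  from someI_ex[OF this]
  show "shared_edge i \<in> edges (b ! i)" "\<exists>j<n. j \<noteq> i \<and> shared_edge i \<in> edges (b ! j)"
    unfolding shared_edge_def by auto
qed

lemma shared_edge_tree: "i \<in> tree_words \<Longrightarrow> shared_edge i \<in> tree"
  using shared_edge unfolding tree_words_def by auto

lemma tree_word_even: assumes i: "i \<in> tree_words" and e: "e \<in> tree" shows "even (c i e)"
proof -
  obtain v where v: "v \<in> V - {1}" "e = {parent v, v}" using tree_edge[OF e] by blast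
  have "(\<Sum>e\<in>{e\<in>E - tree. crosses (subtree v) e}. c i e) = 0"
    using i unfolding tree_words_def by (auto intro!: sum.neutral edge_count_zero)
  then show ?thesis using tree_edge_parity[OF v(1)] i v(2) unfolding tree_words_def by auto
qed

lemma tree_word_ge2: assumes "i \<in> tree_words" "e \<in> edges (b ! i)" shows "2 \<le> c i e"
proof -
  have "0 < c i e" using assms(2) edge_count_pos by blast
  moreover have "even (c i e)" using assms tree_word_even unfolding tree_words_def by auto
  ultimately show ?thesis by presburger
qed

lemma k_split: "S \<subseteq> {..<n} \<Longrightarrow> k e = (\<Sum>i\<in>S. c i e) + (\<Sum>i\<in>{..<n} - S. c i e)"
  unfolding k_sum using sum.subset_diff[of S "{..<n}" "\<lambda>i. c i e"] by (simp add: add.commute)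

lemma attached_sum: "2 * card (attached e) \<le> (\<Sum>i\<in>attached e. c i e)"
proof -
  have "(\<Sum>i\<in>attached e. 2) \<le> (\<Sum>i\<in>attached e. c i e)"
    by (rule sum_mono) (auto simp: attached_def tree_words_def intro: tree_word_ge2 shared_edge)
  then show ?thesis by (simp add: mult.commute)
qed

lemma single_attached_other:
  assumes "attached e = {i0}"
  obtains j where "j < n" "j \<noteq> i0" "1 \<le> c j e" "c j e \<le> (\<Sum>i\<in>{..<n} - attached e. c i e)"
proof -
  have "i0 < n" "shared_edge i0 = e" using assms attached_sub unfolding attached_def by auto
  then obtain j where j: "j < n" "j \<noteq> i0" "e \<in> edges (b ! j)" using shared_edge by blast
  have "c j e \<le> (\<Sum>i\<in>{..<n} - attached e. c i e)" using j assms by (intro member_le_sum) auto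
  moreover have "1 \<le> c j e" using j edge_count_pos by (metis One_nat_def Suc_leI)
  ultimately show ?thesis using that j by blast
qed

lemma tree_edge_mult: assumes e: "e \<in> tree" shows "2 + card (attached e) \<le> k e"
proof -
  have ks: "k e = (\<Sum>i\<in>attached e. c i e) + (\<Sum>i\<in>{..<n} - attached e. c i e)"
    by (rule k_split[OF attached_sub])
  consider "card (attached e) = 0" | "card (attached e) = 1" | "2 \<le> card (attached e)" by linarith
  then show ?thesis
  proof cases
    case 1
    then show ?thesis using mult_ge2 e tree_sub_E by auto
  next
    case 2
    then obtain i0 where "attached e = {i0}" using card_1_singletonE by blast
    then obtain j where "c j e \<le> (\<Sum>i\<in>{..<n} - attached e. c i e)" "1 \<le> c j e"
      by (rule single_attached_other)
    then show ?thesis using ks attached_sum[of e] 2 by linarith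
  next
    case 3
    then show ?thesis using ks attached_sum[of e] by linarith
  qed
qed

lemma steps_split: "steps b = (\<Sum>e\<in>tree. k e) + (\<Sum>i<n. excess i)"
proof -
  have "steps b = (\<Sum>i<n. \<Sum>e\<in>E. c i e)"
    unfolding steps_def by (rule sum.cong[OF refl]) (use sum_edge_count_all[OF finite_E edges_sub_E] in auto)
  also have "\<dots> = (\<Sum>e\<in>E. k e)" unfolding k_sum by (rule sum.swap)
  also have "\<dots> = (\<Sum>e\<in>tree. k e) + (\<Sum>e\<in>E - tree. k e)"
    using sum.subset_diff[OF tree_sub_E finite_E, of k] by (simp add: add.commute)
  also have "(\<Sum>e\<in>E - tree. k e) = (\<Sum>i<n. excess i)"
    unfolding excess_def k_sum by (rule sum.swap)
  finally show ?thesis .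
qed

text \<open>Every tree word is attached to exactly one tree edge, so summing the bounds for tree
  edges gives at least 2 |tree| + |tree words| tree steps.\<close>
lemma sum_card_attached: "(\<Sum>e\<in>tree. card (attached e)) = card tree_words"
  using sum.group[OF finite_tree_words finite_tree, of shared_edge "\<lambda>_. 1::nat"] shared_edge_tree
  unfolding attached_def by auto

lemma sum_attached_bound: "(\<Sum>e\<in>tree. 2 + card (attached e)) = 2 * card tree + card tree_words"
  using sum_card_attached by (simp only: sum.distrib) simp

lemma tree_steps_bound: "2 * card tree + card tree_words \<le> (\<Sum>e\<in>tree. k e)"
  using sum_mono[of tree "\<lambda>e. 2 + card (attached e)" k] tree_edge_mult sum_attached_bound by simp

lemma excess_tree_word: "i \<in> tree_words \<Longrightarrow> excess i = 0"
  unfolding excess_def tree_words_def by (auto intro!: sum.neutral edge_count_zero)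

lemma excess_cyclic_word: assumes "i \<in> cyclic_words" shows "1 \<le> excess i"
proof -
  obtain e where e: "e \<in> edges (b ! i)" "e \<notin> tree" using assms unfolding cyclic_words_def by auto
  have "e \<in> E - tree" using e edges_sub_E assms unfolding cyclic_words_def by auto
  then have "c i e \<le> excess i" unfolding excess_def using finite_E by (intro member_le_sum) auto
  moreover have "0 < c i e" using e edge_count_pos by blast
  ultimately show ?thesis by simp
qed

lemma sum_excess: "(\<Sum>i<n. excess i) = (\<Sum>i\<in>cyclic_words. excess i)"
  using sum.union_disjoint[OF finite_tree_words finite_cyclic_words, of excess] word_classes
    excess_tree_word by simp

lemma excess_bound: "card cyclic_words \<le> (\<Sum>i<n. excess i)"
  using sum_mono[of cyclic_words "\<lambda>_. 1" excess] excess_cyclic_word sum_excess by simp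

lemma n_split: "n = card tree_words + card cyclic_words"
  using card_Un_disjoint[OF finite_tree_words finite_cyclic_words] word_classes
  by (metis card_lessThan)

lemma card_V_tree: "card V = card tree + 1"
  using card_tree finite_V one_in_V by (metis One_nat_def Suc_leI card_gt_0_iff empty_iff le_add_diff_inverse2)

theorem weight_bound: "2 * wt b + n \<le> steps b + 2"
  using steps_split tree_steps_bound excess_bound n_split card_V_tree wt_eq by linarith

end

section \<open>The equality case: every word has a unique partner\<close>

context closed_sentence
begin

text \<open>The chord of a cyclic word: in the equality case, its unique non-tree step.  The chord
  class of g collects the cyclic words with chord g.\<close>
definition "chord i = (SOME g. g \<in> E - tree \<and> c i g = 1 \<and> (\<forall>g'\<in>E - tree. g' \<noteq> g \<longrightarrow> c i g' = 0))"
definition "chord_class g = {j \<in> cyclic_words. chord j = g}"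

lemma finite_chord_class: "finite (chord_class g)"
  unfolding chord_class_def using finite_cyclic_words by simp

lemma chord_class_sub: "chord_class g \<subseteq> {..<n}"
  unfolding chord_class_def cyclic_words_def by auto

context
  assumes tight: "2 * wt b + n = steps b + 2"
begin

text \<open>Equality in the weight bound forces equality in each of its two estimates, and then
  termwise.\<close>
lemma tight_parts:
  "(\<Sum>e\<in>tree. k e) = 2 * card tree + card tree_words" "(\<Sum>i<n. excess i) = card cyclic_words"
  using steps_split tree_steps_bound excess_bound n_split card_V_tree wt_eq tight by linarith+

lemma tree_edge_mult_tight: assumes "e \<in> tree" shows "k e = 2 + card (attached e)"
  using sum_mono_inv[of "\<lambda>e. 2 + card (attached e)" tree k e] tree_edge_mult assms finite_tree
    sum_attached_bound tight_parts(1) by simp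

lemma excess_tight: assumes "i \<in> cyclic_words" shows "excess i = 1"
  using sum_mono_inv[of "\<lambda>_. 1" cyclic_words excess i] excess_cyclic_word assms finite_cyclic_words
    sum_excess tight_parts(2) by simp

lemma chord: assumes "i \<in> cyclic_words"
  shows "chord i \<in> E - tree" "c i (chord i) = 1"
    "\<And>g'. g' \<in> E - tree \<Longrightarrow> g' \<noteq> chord i \<Longrightarrow> c i g' = 0"
proof -
  have "\<exists>g. g \<in> E - tree \<and> c i g = 1 \<and> (\<forall>g'\<in>E - tree. g' \<noteq> g \<longrightarrow> c i g' = 0)"
    using sum_eq_1_nat[of "E - tree" "c i"] finite_E excess_tight[OF assms] unfolding excess_def by blast
  from someI_ex[OF this]
  show "chord i \<in> E - tree" "c i (chord i) = 1"
    "\<And>g'. g' \<in> E - tree \<Longrightarrow> g' \<noteq> chord i \<Longrightarrow> c i g' = 0"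
    unfolding chord_def by auto
qed

lemma non_tree_count: assumes "i \<in> cyclic_words" "e \<in> E - tree"
  shows "c i e = (if e = chord i then 1 else 0)"
  using chord[OF assms(1)] assms(2) by auto

lemma chord_parity: assumes i: "i \<in> cyclic_words" and v: "v \<in> V - {1}"
  shows "odd (c i {parent v, v}) \<longleftrightarrow> crosses (subtree v) (chord i)"
proof -
  have "(\<Sum>e\<in>{e\<in>E - tree. crosses (subtree v) e}. c i e)
      = (\<Sum>e\<in>{e\<in>E - tree. crosses (subtree v) e}. if chord i = e then 1 else 0)"
    by (rule sum.cong[OF refl]) (use non_tree_count[OF i] in auto)
  also have "\<dots> = (if crosses (subtree v) (chord i) then 1 else 0)"
    using finite_E chord(1)[OF i] by (simp add: sum.delta)
  finally show ?thesis using tree_edge_parity[OF v] i unfolding cyclic_words_def by auto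
qed

lemma chord_mult: assumes "g \<in> E - tree" shows "k g = card (chord_class g)"
proof -
  have "k g = (\<Sum>i<n. if i \<in> cyclic_words \<and> chord i = g then 1 else 0)"
    unfolding k_sum
  proof (rule sum.cong[OF refl])
    fix i assume "i \<in> {..<n}"
    then consider "i \<in> tree_words" | "i \<in> cyclic_words" using word_classes by auto
    then show "c i g = (if i \<in> cyclic_words \<and> chord i = g then 1 else 0)"
    proof cases
      case 1
      then have "i \<notin> cyclic_words" "g \<notin> edges (b ! i)"
        using assms word_classes unfolding tree_words_def by auto
      then show ?thesis by (simp add: edge_count_zero)
    next
      case 2 then show ?thesis using non_tree_count[OF 2 assms] by auto
    qed
  qed
  also have "\<dots> = card {i \<in> {..<n}. i \<in> cyclic_words \<and> chord i = g}"
    by (simp add: sum.inter_filter[symmetric])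
  also have "{i \<in> {..<n}. i \<in> cyclic_words \<and> chord i = g} = chord_class g"
    unfolding chord_class_def cyclic_words_def by auto
  finally show ?thesis .
qed

text \<open>Since a chord is traversed at least twice, its class has at least two words.\<close>
lemma chord_class_ge2: assumes "i \<in> cyclic_words"
  shows "2 \<le> card (chord_class (chord i))" "i \<in> chord_class (chord i)"
proof -
  show "2 \<le> card (chord_class (chord i))"
    using chord_mult[OF chord(1)[OF assms]] mult_ge2[of "chord i"] chord(1)[OF assms] by simp
  show "i \<in> chord_class (chord i)" using assms unfolding chord_class_def by auto
qed

lemma odd_tree_edge:
  assumes e: "e \<in> tree" and j: "j \<in> cyclic_words" and odd: "odd (c j e)"
  shows "attached e = {}" "k e = 2" "card (chord_class (chord j)) \<le> 2"
    "\<And>j'. j' \<in> chord_class (chord j) \<Longrightarrow> odd (c j' e)"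
proof -
  obtain v where v: "v \<in> V - {1}" "e = {parent v, v}" using tree_edge[OF e] by blast
  have cr: "crosses (subtree v) (chord j)" using chord_parity[OF j v(1)] odd v(2) by simp
  show odd_class: "\<And>j'. j' \<in> chord_class (chord j) \<Longrightarrow> odd (c j' e)"
    using chord_parity[OF _ v(1)] cr v(2) unfolding chord_class_def by auto
  have disj: "attached e \<inter> chord_class (chord j) = {}"
    unfolding attached_def chord_class_def using word_classes by auto
  have "(\<Sum>i\<in>attached e \<union> chord_class (chord j). c i e) \<le> k e"
    using k_split[of "attached e \<union> chord_class (chord j)" e] attached_sub chord_class_sub by auto
  then have k1: "(\<Sum>i\<in>attached e. c i e) + (\<Sum>i\<in>chord_class (chord j). c i e) \<le> k e"
    using sum.union_disjoint[OF finite_attached finite_chord_class disj, of "\<lambda>i. c i e"] by simp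
  have "(\<Sum>i\<in>chord_class (chord j). 1) \<le> (\<Sum>i\<in>chord_class (chord j). c i e)"
    using odd_class by (intro sum_mono) (metis One_nat_def Suc_leI even_zero neq0_conv)
  then have k2: "card (chord_class (chord j)) \<le> (\<Sum>i\<in>chord_class (chord j). c i e)" by simp
  have "card (attached e) = 0"
    using k1 k2 chord_class_ge2[OF j] attached_sum[of e] tree_edge_mult_tight[OF e] by linarith
  then show "attached e = {}" using finite_attached by simp
  then show "k e = 2" using tree_edge_mult_tight[OF e] by simp
  then show "card (chord_class (chord j)) \<le> 2" using k1 k2 by linarith
qed

lemma attached_pair:
  assumes e: "e \<in> tree" and ne: "attached e \<noteq> {}"
  shows "card (attached e) = 2" "\<And>i. i < n \<Longrightarrow> i \<notin> attached e \<Longrightarrow> c i e = 0"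
proof -
  have ks: "k e = (\<Sum>i\<in>attached e. c i e) + (\<Sum>i\<in>{..<n} - attached e. c i e)"
    by (rule k_split[OF attached_sub])
  have A2: "2 * card (attached e) \<le> (\<Sum>i\<in>attached e. c i e)" by (rule attached_sum)
  have c1: "card (attached e) \<ge> 1" using ne finite_attached by (metis One_nat_def Suc_leI card_gt_0_iff)
  show c2: "card (attached e) = 2"
  proof (rule ccontr)
    assume "card (attached e) \<noteq> 2"
    then have "card (attached e) = 1" using ks A2 tree_edge_mult_tight[OF e] c1 by linarith
    then obtain i0 where i0: "attached e = {i0}" using card_1_singletonE by blast
    then obtain j where j: "j < n" "1 \<le> c j e" "c j e \<le> (\<Sum>i\<in>{..<n} - attached e. c i e)"
      by (rule single_attached_other)
    then have cj: "c j e = 1" using ks A2 tree_edge_mult_tight[OF e] i0 by simp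
    consider "j \<in> tree_words" | "j \<in> cyclic_words" using word_classes j by auto
    then show False
    proof cases
      case 1 then show False using tree_word_even[OF 1 e] cj by simp
    next
      case 2 then show False using odd_tree_edge(1)[OF e 2] cj ne by simp
    qed
  qed
  have "(\<Sum>i\<in>{..<n} - attached e. c i e) = 0" using ks A2 tree_edge_mult_tight[OF e] c2 by linarith
  then show "\<And>i. i < n \<Longrightarrow> i \<notin> attached e \<Longrightarrow> c i e = 0" by simp
qed

lemma tree_word_partner:
  assumes i: "i \<in> tree_words" and j: "j < n" "j \<noteq> i"
    and h: "h \<in> edges (b ! i)" "h \<in> edges (b ! j)"
  shows "j \<in> attached (shared_edge i)"
proof -
  have iN: "i < n" and hD: "h \<in> tree" using i h unfolding tree_words_def by auto
  have "(\<Sum>x\<in>{i, j}. c x h) \<le> k h" using k_split[of "{i, j}" h] iN j by auto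
  moreover have "2 \<le> c i h" using tree_word_ge2[OF i h(1)] .
  moreover have "1 \<le> c j h" using h(2) edge_count_pos by (metis One_nat_def Suc_leI)
  ultimately have "attached h \<noteq> {}" using j tree_edge_mult_tight[OF hD] by auto
  moreover have "0 < c i h" "0 < c j h" using h edge_count_pos by blast+
  ultimately have "i \<in> attached h" "j \<in> attached h"
    using attached_pair(2)[OF hD] iN j by (metis less_numeral_extra(3))+
  then show ?thesis unfolding attached_def by simp
qed

text \<open>The chord of a cyclic word separates two vertices, so some tree edge is traversed an odd
  number of times; hence the chord class has exactly two elements.\<close>
lemma card_chord_class: assumes i: "i \<in> cyclic_words" shows "card (chord_class (chord i)) \<le> 2"
proof -
  obtain x y where xy: "chord i = {x, y}" "x \<noteq> y" "x \<in> V" "y \<in> V"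
    using E_shape chord(1)[OF i] by blast
  then obtain v where v: "v \<in> V - {1}" "crosses (subtree v) {x, y}" using separating_subtree by blast
  then have "odd (c i {parent v, v})" using chord_parity[OF i v(1)] xy by simp
  moreover have "{parent v, v} \<in> tree" using v unfolding tree_def by auto
  ultimately show ?thesis using odd_tree_edge(3) i by blast
qed

lemma cyclic_word_partner:
  assumes i: "i \<in> cyclic_words" and j: "j < n" "j \<noteq> i"
    and h: "h \<in> edges (b ! i)" "h \<in> edges (b ! j)"
  shows "j \<in> chord_class (chord i)"
proof (cases "h \<in> tree")
  case False
  have iN: "i < n" using i unfolding cyclic_words_def by auto
  have hE: "h \<in> E - tree" using False h edges_sub_E iN by auto
  have jC: "j \<in> cyclic_words" using h(2) False j unfolding cyclic_words_def by auto
  have "h = chord i" "h = chord j"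
    using non_tree_count[OF i hE] non_tree_count[OF jC hE] h edge_count_pos
    by (metis less_numeral_extra(3))+
  then show ?thesis using jC unfolding chord_class_def by auto
next
  case hD: True
  have iN: "i < n" using i unfolding cyclic_words_def by auto
  obtain v where v: "v \<in> V - {1}" "h = {parent v, v}" using tree_edge[OF hD] by blast
  have "attached h = {}"
  proof (rule ccontr)
    assume ne: "attached h \<noteq> {}"
    have "i \<notin> attached h" using i word_classes unfolding attached_def by auto
    then have "c i h = 0" using attached_pair(2)[OF hD ne iN] by blast
    then show False using h(1) edge_count_pos by (metis less_numeral_extra(3))
  qed
  then have kh: "k h = 2" using tree_edge_mult_tight[OF hD] by simp
  have ci: "c i h \<ge> 1" "c j h \<ge> 1" using h edge_count_pos by (metis One_nat_def Suc_leI)+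
  have ks: "k h = c i h + c j h + (\<Sum>x\<in>{..<n} - {i, j}. c x h)"
    using k_split[of "{i, j}" h] iN j by auto
  have "c i h = 1" "(\<Sum>x\<in>{..<n} - {i, j}. c x h) = 0" using ks kh ci by linarith+
  then have only_ij: "\<And>x. x < n \<Longrightarrow> x \<noteq> i \<Longrightarrow> x \<noteq> j \<Longrightarrow> c x h = 0" by simp
  have cr: "crosses (subtree v) (chord i)" using chord_parity[OF i v(1)] v(2) \<open>c i h = 1\<close> by simp
  obtain j' where j': "j' \<in> chord_class (chord i)" "j' \<noteq> i"
    using chord_class_ge2[OF i] finite_chord_class
    by (metis card_le_Suc0_iff_eq not_less_eq_eq numeral_2_eq_2)
  then have "j' \<in> cyclic_words" "chord j' = chord i" unfolding chord_class_def by auto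
  then have "odd (c j' h)" using chord_parity[OF _ v(1)] cr v(2) by auto
  then have "j' = j" using only_ij j' \<open>j' \<in> cyclic_words\<close> unfolding cyclic_words_def
    by (metis even_zero mem_Collect_eq)
  then show ?thesis using j' by simp
qed

theorem unique_partner:
  assumes i: "i < n"
    and j1: "j1 < n" "j1 \<noteq> i" "edges (b ! i) \<inter> edges (b ! j1) \<noteq> {}"
    and j2: "j2 < n" "j2 \<noteq> i" "edges (b ! i) \<inter> edges (b ! j2) \<noteq> {}"
  shows "j1 = j2"
proof -
  obtain h1 where h1: "h1 \<in> edges (b ! i)" "h1 \<in> edges (b ! j1)" using j1 by blast
  obtain h2 where h2: "h2 \<in> edges (b ! i)" "h2 \<in> edges (b ! j2)" using j2 by blast
  consider "i \<in> tree_words" | "i \<in> cyclic_words" using word_classes i by auto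
  then show ?thesis
  proof cases
    case 1
    have "i \<in> attached (shared_edge i)" using 1 unfolding attached_def by simp
    moreover have "card (attached (shared_edge i)) = 2"
      using attached_pair(1)[OF shared_edge_tree[OF 1]] \<open>i \<in> attached (shared_edge i)\<close> by auto
    ultimately have "card (attached (shared_edge i) - {i}) = 1" by simp
    moreover have "j1 \<in> attached (shared_edge i) - {i}" "j2 \<in> attached (shared_edge i) - {i}"
      using tree_word_partner[OF 1 j1(1,2) h1] tree_word_partner[OF 1 j2(1,2) h2] j1 j2 by auto
    ultimately show ?thesis by (metis card_1_singletonE singletonD)
  next
    case 2
    have "card (chord_class (chord i) - {i}) \<le> 1"
      using card_chord_class[OF 2] chord_class_ge2(2)[OF 2] finite_chord_class by auto
    moreover have "j1 \<in> chord_class (chord i) - {i}" "j2 \<in> chord_class (chord i) - {i}"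
      using cyclic_word_partner[OF 2 j1(1,2) h1] cyclic_word_partner[OF 2 j2(1,2) h2] j1 j2 by auto
    ultimately show ?thesis using finite_chord_class card_le_Suc0_iff_eq
      by (metis One_nat_def finite_Diff)
  qed
qed

end

end

section \<open>The pair decomposition of a CLT sentence\<close>

context closed_sentence
begin

text \<open>The partner of a word: in the equality case, the unique other word sharing an edge
  with it.\<close>
definition "partner i = (THE j. j < n \<and> j \<noteq> i \<and> edges (b ! i) \<inter> edges (b ! j) \<noteq> {})"

context
  assumes tight: "2 * wt b + n = steps b + 2"
begin

lemma partner_ex1: "i < n \<Longrightarrow> \<exists>!j. j < n \<and> j \<noteq> i \<and> edges (b ! i) \<inter> edges (b ! j) \<noteq> {}"
  using shares_edge unique_partner[OF tight] by blast

lemma partner: assumes "i < n"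
  shows "partner i < n" "partner i \<noteq> i" "edges (b ! i) \<inter> edges (b ! partner i) \<noteq> {}"
  using theI'[OF partner_ex1[OF assms]] unfolding partner_def by auto

lemma partner_eq:
  "i < n \<Longrightarrow> j < n \<Longrightarrow> j \<noteq> i \<Longrightarrow> edges (b ! i) \<inter> edges (b ! j) \<noteq> {} \<Longrightarrow> partner i = j"
  using the1_equality[OF partner_ex1] unfolding partner_def by blast

lemma partner_partner: "i < n \<Longrightarrow> partner (partner i) = i"
  using partner partner_eq by (metis Int_commute)

lemma partner_isolated:
  assumes i: "i < n" and x: "x \<in> {i, partner i}" and z: "z < n" "z \<notin> {i, partner i}"
  shows "edges (b ! x) \<inter> edges (b ! z) = {}"
proof -
  have "x < n" "z \<noteq> x" "z \<noteq> partner x"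
    using i x z partner(1,2)[OF i] partner_partner[OF i] by auto
  then show ?thesis using partner_eq z(1) by blast
qed

lemma partner_pair_closed: assumes i: "i < n" shows "closed_sentence [b ! i, b ! partner i]"
proof
  show "weak_CLT [b ! i, b ! partner i]"
    using isolated_pair_weak_CLT[OF weak i partner(1)[OF i] partner(2)[OF i, THEN not_sym]
        partner(3)[OF i] partner_isolated[OF i]] .
  show "\<forall>x<length [b ! i, b ! partner i]. closed_word ([b ! i, b ! partner i] ! x) \<and>
      hd ([b ! i, b ! partner i] ! x) = 1 \<and> \<not> has_self_edge ([b ! i, b ! partner i] ! x)"
    using closed i partner(1)[OF i] by (auto simp: less_Suc_eq)
qed simp

lemma partner_pair_bound:
  "i < n \<Longrightarrow> 2 * card (supp (b ! i) \<union> supp (b ! partner i)) \<le> steps [b ! i, b ! partner i]"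
  using closed_sentence.weight_bound[OF partner_pair_closed] wt_pair by fastforce

lemma partner_pairing: "even n" "\<exists>p. pairing n p (\<lambda>r. partner (p r))"
  using involution_pairing[of n partner] partner partner_partner by blast+

lemma partner_pairs_edges_disjoint:
  assumes pq: "pairing n p (\<lambda>r. partner (p r))" and r: "r < n div 2" "r' < n div 2" "r \<noteq> r'"
  shows "(edges (b ! p r) \<union> edges (b ! partner (p r))) \<inter> (edges (b ! p r') \<union> edges (b ! partner (p r'))) = {}"
proof -
  have "edges (b ! x) \<inter> edges (b ! z) = {}"
    if "x \<in> {p r, partner (p r)}" "z \<in> {p r', partner (p r')}" for x z
  proof (rule partner_isolated[OF pairingD(1)[OF pq r(1)] that(1)])
    show "z < n" using that(2) pairingD(1,2)[OF pq r(2)] by auto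
    show "z \<notin> {p r, partner (p r)}" using that(2) pairingD(4)[OF pq r] by auto
  qed
  then show ?thesis by blast
qed

text \<open>Summing the weight bounds of the partner pairs against the global equality: every
  pair attains its bound, and the vertex sets of different pairs meet only in 1.\<close>
lemma partner_pairs_tight:
  assumes pq: "pairing n p (\<lambda>r. partner (p r))"
  defines "X r \<equiv> supp (b ! p r) \<union> supp (b ! partner (p r))"
  shows "\<And>r. r < n div 2 \<Longrightarrow> 2 * wt [b ! p r, b ! partner (p r)] = steps [b ! p r, b ! partner (p r)]"
    and "\<And>r r'. r < n div 2 \<Longrightarrow> r' < n div 2 \<Longrightarrow> r \<noteq> r' \<Longrightarrow> (X r - {1}) \<inter> (X r' - {1}) = {}"
proof -
  let ?m = "n div 2" and ?y = "\<lambda>r. steps [b ! p r, b ! partner (p r)]"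
  note p_lt = pairingD(1)[OF pq]
  have local: "2 * card (X r) \<le> ?y r" if "r \<in> {..<?m}" for r
    using partner_pair_bound p_lt that unfolding X_def by simp
  have base: "1 \<in> X r" if "r \<in> {..<?m}" for r
    using word_closed[OF p_lt] that unfolding X_def supp_def closed_word_def by (auto intro: hd_in_set)
  have finite_X: "finite (X r)" if "r \<in> {..<?m}" for r unfolding X_def supp_def by simp
  have "steps b = sum ?y {..<?m}"
    unfolding steps_def using sum_pairing[OF pq] steps_pair by simp
  moreover have "wt b = card (\<Union>(X ` {..<?m}))"
    unfolding wt_def X_def using UN_pairing[OF pq, of "\<lambda>i. supp (b ! i)"] by simp
  moreover have "even n" by (rule partner_pairing(1))
  ultimately have global: "sum ?y {..<?m} + 2 \<le> 2 * card (\<Union>(X ` {..<?m})) + 2 * card {..<?m}"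
    using tight by simp
  have "0 < ?m" using nonempty \<open>even n\<close> by presburger
  then have nonempty_pairs: "{..<?m} \<noteq> {}" by auto
  note accounting = tight_union_bound[OF finite_lessThan finite_X base nonempty_pairs local global]
  show "\<And>r. r < ?m \<Longrightarrow> 2 * wt [b ! p r, b ! partner (p r)] = ?y r"
    using accounting(1) unfolding wt_pair X_def by simp
  show "\<And>r r'. r < ?m \<Longrightarrow> r' < ?m \<Longrightarrow> r \<noteq> r' \<Longrightarrow> (X r - {1}) \<inter> (X r' - {1}) = {}"
    using accounting(2) by simp
qed

theorem pair_decomposition:
  "even n \<and> (\<exists>p q. pairing n p q \<and>
     (\<forall>r < n div 2. CLT_pair (b ! p r) (b ! q r)) \<and>
     (\<forall>r < n div 2. \<forall>r' < n div 2. r \<noteq> r' \<longrightarrow>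
        (edges (b ! p r) \<union> edges (b ! q r)) \<inter> (edges (b ! p r') \<union> edges (b ! q r')) = {}) \<and>
     (\<forall>r < n div 2. \<forall>r' < n div 2. r \<noteq> r' \<longrightarrow>
        ((supp (b ! p r) \<union> supp (b ! q r)) - {1}) \<inter> ((supp (b ! p r') \<union> supp (b ! q r')) - {1}) = {}))"
proof -
  obtain p where pq: "pairing n p (\<lambda>r. partner (p r))" using partner_pairing(2) by blast
  have "CLT_pair (b ! p r) (b ! partner (p r))" if r: "r < n div 2" for r
  proof (rule CLT_pair_of_tight)
    show "weak_CLT [b ! p r, b ! partner (p r)]"
      using closed_sentence.weak[OF partner_pair_closed[OF pairingD(1)[OF pq r]]] .
    show "b ! p r \<noteq> []" "b ! partner (p r) \<noteq> []"
      using word_closed(1) pairingD(1,2)[OF pq r] unfolding closed_word_def by auto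
  qed (rule partner_pairs_tight(1)[OF pq r])
  then show ?thesis
    using partner_pairing(1) pq partner_pairs_edges_disjoint[OF pq] partner_pairs_tight(2)[OF pq]
    by blast
qed

end

end

theorem mainTheorem5:
  fixes a :: "nat list list"
  assumes clt: "CLT a"
    and closed: "\<forall>i<length a. closed_word (a ! i) \<and> hd (a ! i) = 1 \<and> \<not> has_self_edge (a ! i)"
  shows "(\<forall>i<length a. \<exists>!j. j < length a \<and> j \<noteq> i \<and> edges (a ! i) \<inter> edges (a ! j) \<noteq> {})
    \<and> even (length a)
    \<and> (\<exists>p q :: nat \<Rightarrow> nat.
          (\<forall>r < length a div 2. p r < length a \<and> q r < length a \<and> p r \<noteq> q r) \<and>
          (\<forall>r < length a div 2. \<forall>r' < length a div 2. r \<noteq> r' \<longrightarrow> {p r, q r} \<inter> {p r', q r'} = {}) \<and>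
          (\<Union>r < length a div 2. {p r, q r}) = {..<length a} \<and>
          (\<forall>r < length a div 2. CLT_pair (a ! p r) (a ! q r)) \<and>
          (\<forall>r < length a div 2. \<forall>r' < length a div 2. r \<noteq> r' \<longrightarrow>
              (edges (a ! p r) \<union> edges (a ! q r)) \<inter> (edges (a ! p r') \<union> edges (a ! q r')) = {}) \<and>
          (\<forall>r < length a div 2. \<forall>r' < length a div 2. r \<noteq> r' \<longrightarrow>
              ((supp (a ! p r) \<union> supp (a ! q r)) - {1}) \<inter> ((supp (a ! p r') \<union> supp (a ! q r')) - {1}) = {}))"
proof -
  have "\<forall>i<length a. a ! i \<noteq> []" using closed unfolding closed_word_def by blast
  note tight = CLT_tight[OF clt this]
  interpret closed_sentence a
    using tight(1) clt closed unfolding CLT_def by unfold_locales auto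
  have part_i: "\<forall>i<length a. \<exists>!j. j < length a \<and> j \<noteq> i \<and> edges (a ! i) \<inter> edges (a ! j) \<noteq> {}"
    using partner_ex1[OF tight(2)] by blast
  obtain p q where "even (length a)" "pairing (length a) p q"
    "\<forall>r < length a div 2. CLT_pair (a ! p r) (a ! q r)"
    "\<forall>r < length a div 2. \<forall>r' < length a div 2. r \<noteq> r' \<longrightarrow>
       (edges (a ! p r) \<union> edges (a ! q r)) \<inter> (edges (a ! p r') \<union> edges (a ! q r')) = {}"
    "\<forall>r < length a div 2. \<forall>r' < length a div 2. r \<noteq> r' \<longrightarrow>
       ((supp (a ! p r) \<union> supp (a ! q r)) - {1}) \<inter> ((supp (a ! p r') \<union> supp (a ! q r')) - {1}) = {}"
    using pair_decomposition[OF tight(2)] by blast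
  then show ?thesis using part_i unfolding pairing_def by blast
qed

end
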